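(* If $\mathcal{F}=\{f_i\}_{i=1}^k$ is a frame for $\mathcal{H}_n$, then there exists $y\in\mathcal{H}_n$ such that $\operatorname{rob}(\mathcal{F})=\operatorname{rob}(\{\langle f_i,y\rangle\}_{i=1}^k)$, where the sequence of scalars $\{\langle f_i,y\rangle\}_{i=1}^k$ is regarded as a frame for the one-dimensional space of scalars (so its maximum robustness equals one less than the number of nonzero entries).
   Context: $\mathcal{H}_n$ is an $n$-dimensional real or complex Hilbert space. A finite sequence of vectors in a finite-dimensional Hilbert space is a frame for it iff it spans it. A frame $\{f_i\}_{i=1}^k$ is robust to $r$ erasures if for every index set $I\subseteq\{1,\dots,k\}$ with $|I|=r$, the sequence $\{f_i\}_{i\notin I}$ still spans the space. The maximum robustness $\operatorname{rob}(\mathcal{F})$ is the largest $r$ such that $\mathcal{F}$ is robust to $r$ erasures. *)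

theory Defs
  imports "HOL-Analysis.Analysis"
begin

text \<open>Frames and erasure robustness, generic in the span operator of the ambient
  finite-dimensional space. Frame vectors are indexed by 1..k.\<close>

definition is_frame :: "('v set \<Rightarrow> 'v set) \<Rightarrow> (nat \<Rightarrow> 'v) \<Rightarrow> nat \<Rightarrow> bool" where
  "is_frame sp f k \<longleftrightarrow> sp (f ` {1..k}) = UNIV"

definition robust_to :: "('v set \<Rightarrow> 'v set) \<Rightarrow> (nat \<Rightarrow> 'v) \<Rightarrow> nat \<Rightarrow> nat \<Rightarrow> bool" where
  "robust_to sp f k r \<longleftrightarrow>
     (\<forall>I. I \<subseteq> {1..k} \<longrightarrow> card I = r \<longrightarrow> sp (f ` ({1..k} - I)) = UNIV)"

definition max_rob :: "('v set \<Rightarrow> 'v set) \<Rightarrow> (nat \<Rightarrow> 'v) \<Rightarrow> nat \<Rightarrow> nat" where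
  "max_rob sp f k = Max {r. r \<le> k \<and> robust_to sp f k r}"

definition cinner :: "complex ^ 'n \<Rightarrow> complex ^ 'n \<Rightarrow> complex" where
  "cinner x y = (\<Sum>j\<in>UNIV. x $ j * cnj (y $ j))"

end

theory Submission
  imports Defs
begin

text \<open>Let \<open>r\<close> be the maximum robustness of the frame. Some \<open>r + 1\<close> erasures leave a
  non-spanning family, so some \<open>y \<noteq> 0\<close> is orthogonal to it, and the nonzero entries of
  \<open>\<langle>f\<^sub>i, y\<rangle>\<close> lie among those \<open>r + 1\<close> indices. There cannot be fewer than \<open>r + 1\<close> of
  them: erasing any \<open>r\<close> indices that contain them all leaves a spanning family orthogonal to
  \<open>y\<close>. A scalar sequence with exactly \<open>r + 1\<close> nonzero entries has robustness \<open>r\<close>.\<close>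

lemma robust_to_0_iff_is_frame: "robust_to sp f k 0 \<longleftrightarrow> is_frame sp f k"
  unfolding robust_to_def is_frame_def
  by (metis Diff_empty card_0_eq empty_subsetI finite_atLeastAtMost finite_subset card.empty)

lemma
  assumes "is_frame sp f k"
  shows max_rob_le: "max_rob sp f k \<le> k"
    and robust_to_max_rob: "robust_to sp f k (max_rob sp f k)"
proof -
  have "0 \<in> {r. r \<le> k \<and> robust_to sp f k r}"
    using assms by (simp add: robust_to_0_iff_is_frame)
  then have "max_rob sp f k \<in> {r. r \<le> k \<and> robust_to sp f k r}"
    unfolding max_rob_def by (intro Max_in) auto
  then show "max_rob sp f k \<le> k" "robust_to sp f k (max_rob sp f k)" by auto
qed

lemma not_robust_to_above_max_rob:
  assumes "max_rob sp f k < s" "s \<le> k"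
  shows "\<not> robust_to sp f k s"
proof
  assume "robust_to sp f k s"
  then have "s \<le> max_rob sp f k"
    unfolding max_rob_def using assms(2) by (intro Max_ge) auto
  then show False using assms(1) by simp
qed

lemma max_rob_eqI:
  assumes "r \<le> k" "robust_to sp f k r"
    and "\<And>s. r < s \<Longrightarrow> s \<le> k \<Longrightarrow> \<not> robust_to sp f k s"
  shows "max_rob sp f k = r"
  unfolding max_rob_def
proof (rule Max_eqI)
  show "s \<le> r" if "s \<in> {r. r \<le> k \<and> robust_to sp f k r}" for s
    using that assms(3) not_le by auto
qed (use assms(1,2) in auto)

lemma max_rob_less:
  assumes "is_frame sp f k" "sp {} \<noteq> UNIV"
  shows "max_rob sp f k < k"
proof -
  have "\<not> robust_to sp f k k"
    using assms(2) unfolding robust_to_def by (metis Diff_cancel card_atLeastAtMost diff_Suc_1 image_empty order_refl)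
  then show ?thesis
    using max_rob_le[OF assms(1)] robust_to_max_rob[OF assms(1)] le_neq_implies_less by metis
qed

lemma span_field_eq_UNIV_iff:
  "vector_space_over_itself.span T = (UNIV :: 'a::field set) \<longleftrightarrow> (\<exists>t\<in>T. t \<noteq> 0)"
proof
  assume span_T: "vector_space_over_itself.span T = UNIV"
  show "\<exists>t\<in>T. t \<noteq> 0"
  proof (rule ccontr)
    assume "\<not> (\<exists>t\<in>T. t \<noteq> 0)"
    then have "vector_space_over_itself.span T \<subseteq> vector_space_over_itself.span {0}"
      by (intro vector_space_over_itself.span_mono) auto
    then have "(1 :: 'a) \<in> vector_space_over_itself.span {0}" using span_T by blast
    then show False by simp
  qed
next
  assume "\<exists>t\<in>T. t \<noteq> 0"
  then obtain t where t: "t \<in> T" "t \<noteq> 0" by blast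
  have "x / t * t \<in> vector_space_over_itself.span T" for x :: 'a
    by (intro vector_space_over_itself.span_scale vector_space_over_itself.span_base t(1))
  then show "vector_space_over_itself.span T = UNIV" using t(2) by auto
qed

lemma is_frame_field_iff:
  fixes c :: "nat \<Rightarrow> 'a::field"
  shows "is_frame vector_space_over_itself.span c k \<longleftrightarrow> {i\<in>{1..k}. c i \<noteq> 0} \<noteq> {}"
  unfolding is_frame_def span_field_eq_UNIV_iff by auto

lemma robust_to_field_iff:
  fixes c :: "nat \<Rightarrow> 'a::field"
  assumes "s \<le> k"
  shows "robust_to vector_space_over_itself.span c k s \<longleftrightarrow> s < card {i\<in>{1..k}. c i \<noteq> 0}"
    (is "_ \<longleftrightarrow> s < card ?N")
proof -
  have "(\<exists>t\<in>c ` ({1..k} - I). t \<noteq> 0) \<longleftrightarrow> \<not> ?N \<subseteq> I" for I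
    by blast
  then have "robust_to vector_space_over_itself.span c k s \<longleftrightarrow>
      (\<forall>I. I \<subseteq> {1..k} \<longrightarrow> card I = s \<longrightarrow> \<not> ?N \<subseteq> I)"
    unfolding robust_to_def span_field_eq_UNIV_iff by presburger
  also have "\<dots> \<longleftrightarrow> s < card ?N"
  proof
    assume "\<forall>I. I \<subseteq> {1..k} \<longrightarrow> card I = s \<longrightarrow> \<not> ?N \<subseteq> I"
    moreover have "\<exists>I. ?N \<subseteq> I \<and> I \<subseteq> {1..k} \<and> card I = s" if "card ?N \<le> s"
    proof -
      have "?N \<subseteq> {1..k}" by blast
      then show ?thesis using exists_subset_between[OF that] assms by simp
    qed
    ultimately show "s < card ?N" by (meson not_le)
  next
    assume "s < card ?N"
    then show "\<forall>I. I \<subseteq> {1..k} \<longrightarrow> card I = s \<longrightarrow> \<not> ?N \<subseteq> I"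
      using card_mono[OF finite_subset[OF _ finite_atLeastAtMost]] by (metis not_le)
  qed
  finally show ?thesis .
qed

lemma max_rob_field:
  fixes c :: "nat \<Rightarrow> 'a::field"
  assumes "card {i\<in>{1..k}. c i \<noteq> 0} = Suc r"
  shows "max_rob vector_space_over_itself.span c k = r"
proof (rule max_rob_eqI)
  have "card {i\<in>{1..k}. c i \<noteq> 0} \<le> card {1..k}"
    by (intro card_mono) auto
  then show "r \<le> k" using assms by simp
  then show "robust_to vector_space_over_itself.span c k r"
    using assms by (simp add: robust_to_field_iff)
  show "\<not> robust_to vector_space_over_itself.span c k s" if "r < s" "s \<le> k" for s
    using that assms by (simp add: robust_to_field_iff)
qed

lemma exists_pairing_support_card_eq_Suc_max_rob:
  fixes sp :: "'v set \<Rightarrow> 'v set" and g :: "'v \<Rightarrow> 'w::zero \<Rightarrow> 'a::zero"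
  assumes nondegenerate: "\<And>S. sp S = UNIV \<longleftrightarrow> (\<forall>y. (\<forall>s\<in>S. g s y = 0) \<longrightarrow> y = 0)"
    and "sp {} \<noteq> UNIV" and frame: "is_frame sp f k"
  shows "\<exists>y. card {i\<in>{1..k}. g (f i) y \<noteq> 0} = Suc (max_rob sp f k)"
proof -
  define r where "r = max_rob sp f k"
  have "r < k" unfolding r_def using max_rob_less frame assms(2) .
  have robust_r: "robust_to sp f k r"
    unfolding r_def using robust_to_max_rob[OF frame] .
  have "\<not> robust_to sp f k (Suc r)"
    using \<open>r < k\<close> unfolding r_def by (intro not_robust_to_above_max_rob) auto
  then obtain I where I: "I \<subseteq> {1..k}" "card I = Suc r" "sp (f ` ({1..k} - I)) \<noteq> UNIV"
    unfolding robust_to_def by auto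
  then obtain y where "y \<noteq> 0" and y: "\<And>i. i \<in> {1..k} - I \<Longrightarrow> g (f i) y = 0"
    unfolding nondegenerate by auto
  define N where "N = {i\<in>{1..k}. g (f i) y \<noteq> 0}"
  have "N \<subseteq> I" using y by (auto simp: N_def)
  have "r < card N"
  proof (rule ccontr)
    assume "\<not> r < card N"
    moreover have "N \<subseteq> {1..k}" by (auto simp: N_def)
    ultimately obtain J where J: "N \<subseteq> J" "J \<subseteq> {1..k}" "card J = r"
      using exists_subset_between[of N r "{1..k}"] \<open>r < k\<close> by auto
    then have "sp (f ` ({1..k} - J)) = UNIV"
      using robust_r unfolding robust_to_def by simp
    then have "\<not> (\<forall>i\<in>{1..k} - J. g (f i) y = 0)"
      using \<open>y \<noteq> 0\<close> unfolding nondegenerate by blast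
    then obtain i where "i \<in> {1..k} - J" "g (f i) y \<noteq> 0" by blast
    then show False using J(1) by (auto simp: N_def)
  qed
  moreover have "card N \<le> card I"
    using card_mono[OF finite_subset[OF I(1) finite_atLeastAtMost] \<open>N \<subseteq> I\<close>] .
  ultimately have "card N = Suc r" using I(2) by simp
  then show ?thesis unfolding N_def r_def by blast
qed

lemma max_rob_eq_max_rob_pairing:
  fixes sp :: "'v set \<Rightarrow> 'v set" and g :: "'v \<Rightarrow> 'w::zero \<Rightarrow> 'a::field"
  assumes "\<And>S. sp S = UNIV \<longleftrightarrow> (\<forall>y. (\<forall>s\<in>S. g s y = 0) \<longrightarrow> y = 0)"
    and "sp {} \<noteq> UNIV" and "is_frame sp f k"
  shows "\<exists>y. is_frame vector_space_over_itself.span (\<lambda>i. g (f i) y) k \<and>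
             max_rob sp f k = max_rob vector_space_over_itself.span (\<lambda>i. g (f i) y) k"
proof -
  obtain y where y: "card {i\<in>{1..k}. g (f i) y \<noteq> 0} = Suc (max_rob sp f k)"
    using exists_pairing_support_card_eq_Suc_max_rob[OF assms] by blast
  then have "{i\<in>{1..k}. g (f i) y \<noteq> 0} \<noteq> {}"
    using card_gt_0_iff[of "{i\<in>{1..k}. g (f i) y \<noteq> 0}"] by simp
  then show ?thesis
    by (intro exI[of _ y]) (simp add: is_frame_field_iff max_rob_field[OF y])
qed

context vector_space
begin

lemma exists_functional_separating_from_span:
  assumes "x \<notin> span S"
  obtains L where "Vector_Spaces.linear scale (*) L" "L x = 1" "\<And>s. s \<in> S \<Longrightarrow> L s = 0"
proof -
  interpret pair: vector_space_pair scale "(*) :: 'a \<Rightarrow> 'a \<Rightarrow> 'a" by unfold_locales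
  obtain B where B: "B \<subseteq> span S" "independent B" "span S \<subseteq> span B"
    by (rule basis_exists)
  have "span B = span S"
    using B by (metis span_mono span_span subset_antisym)
  then have xB: "x \<notin> span B" using assms by simp
  have indep: "independent (insert x B)" using independent_insertI[OF xB B(2)] .
  define L where "L = pair.construct (insert x B) (\<lambda>b. if b = x then 1 else 0)"
  have lin: "Vector_Spaces.linear scale (*) L"
    unfolding L_def by (rule pair.linear_construct[OF indep])
  have "L x = 1" unfolding L_def using pair.construct_basis[OF indep] by simp
  have "L b = 0" if "b \<in> B" for b
    using that xB span_base pair.construct_basis[OF indep] unfolding L_def by fastforce
  then have "L s = 0" if "s \<in> S" for s
    using that B(3) span_base pair.linear_eq_0_on_span[OF lin] by blast
  with lin \<open>L x = 1\<close> show thesis by (rule that)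
qed

end

definition vec_dot :: "'a::field ^ 'n \<Rightarrow> 'a ^ 'n \<Rightarrow> 'a" where
  "vec_dot x w = (\<Sum>j\<in>UNIV. x $ j * w $ j)"

lemma vec_dot_axis: "vec_dot (axis j 1) w = w $ j"
  unfolding vec_dot_def axis_def by (simp add: if_distrib[where f = "\<lambda>c. c * _"] cong: if_cong)

lemma vec_dot_linear_functional:
  assumes "Vector_Spaces.linear (*s) (*) L"
  shows "L x = vec_dot x (\<chi> j. L (axis j 1))"
proof -
  interpret L: Vector_Spaces.linear "(*s)" "(*)" L by fact
  have "L x = L (\<Sum>j\<in>UNIV. x $ j *s axis j 1)" by (simp add: basis_expansion)
  also have "\<dots> = vec_dot x (\<chi> j. L (axis j 1))"
    by (simp add: L.sum L.scale vec_dot_def)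
  finally show ?thesis .
qed

lemma vec_dot_eq_0_on_span:
  assumes "\<And>s. s \<in> S \<Longrightarrow> vec_dot s w = 0" and "x \<in> vec.span S"
  shows "vec_dot x w = 0"
proof -
  have "vec.subspace {x. vec_dot x w = 0}"
    unfolding vec.subspace_def vec_dot_def
    by (auto simp: sum.distrib distrib_right mult.assoc simp flip: sum_distrib_left)
  then show ?thesis using vec.span_induct[OF assms(2)] assms(1) by auto
qed

lemma vec_span_eq_UNIV_iff_annihilator:
  fixes S :: "('a::field ^ 'n) set"
  shows "vec.span S = UNIV \<longleftrightarrow> (\<forall>w. (\<forall>s\<in>S. vec_dot s w = 0) \<longrightarrow> w = 0)"
proof
  assume span_S: "vec.span S = UNIV"
  show "\<forall>w. (\<forall>s\<in>S. vec_dot s w = 0) \<longrightarrow> w = 0"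
  proof (intro allI impI)
    fix w assume w: "\<forall>s\<in>S. vec_dot s w = 0"
    have "vec_dot (axis j 1) w = 0" for j
      using w span_S vec_dot_eq_0_on_span[of S w "axis j 1"] by blast
    then show "w = 0" by (simp add: vec_dot_axis vec_eq_iff)
  qed
next
  assume annihilator_trivial: "\<forall>w. (\<forall>s\<in>S. vec_dot s w = 0) \<longrightarrow> w = 0"
  show "vec.span S = UNIV"
  proof (rule ccontr)
    assume "vec.span S \<noteq> UNIV"
    then obtain x where x: "x \<notin> vec.span S" by auto
    obtain L where L: "Vector_Spaces.linear (*s) (*) L" "L x = 1" "\<And>s. s \<in> S \<Longrightarrow> L s = 0"
      by (rule vec.exists_functional_separating_from_span[OF x]) (rule that)
    define w where "w = (\<chi> j. L (axis j 1))"
    have dot_w: "vec_dot s w = L s" for s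
      unfolding w_def by (rule vec_dot_linear_functional[OF L(1), symmetric])
    have "w = 0"
      by (rule annihilator_trivial[rule_format]) (simp add: dot_w L(3))
    then show False using dot_w[of x] L(2) by (simp add: vec_dot_def)
  qed
qed

lemma real_vec_span_eq_UNIV_iff:
  fixes S :: "(real ^ 'n) set"
  shows "vec.span S = UNIV \<longleftrightarrow> (\<forall>y. (\<forall>s\<in>S. s \<bullet> y = 0) \<longrightarrow> y = 0)"
  by (simp add: vec_span_eq_UNIV_iff_annihilator vec_dot_def inner_vec_def)

lemma complex_vec_span_eq_UNIV_iff:
  fixes S :: "(complex ^ 'n) set"
  shows "vec.span S = UNIV \<longleftrightarrow> (\<forall>y. (\<forall>s\<in>S. cinner s y = 0) \<longrightarrow> y = 0)"
proof -
  define conj_vec :: "complex ^ 'n \<Rightarrow> complex ^ 'n" where "conj_vec y = (\<chi> j. cnj (y $ j))" for y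
  have cinner_conj_vec: "cinner s y = vec_dot s (conj_vec y)" for s y
    by (simp add: cinner_def vec_dot_def conj_vec_def)
  have conj_conj: "conj_vec (conj_vec y) = y" and conj_eq_0: "conj_vec y = 0 \<longleftrightarrow> y = 0" for y
    by (simp_all add: conj_vec_def vec_eq_iff)
  have "(\<forall>w. (\<forall>s\<in>S. vec_dot s w = 0) \<longrightarrow> w = 0) \<longleftrightarrow>
      (\<forall>y. (\<forall>s\<in>S. vec_dot s (conj_vec y) = 0) \<longrightarrow> y = 0)"
  proof (intro iffI allI impI)
    fix y
    assume annihilator_trivial: "\<forall>w. (\<forall>s\<in>S. vec_dot s w = 0) \<longrightarrow> w = 0"
      and y: "\<forall>s\<in>S. vec_dot s (conj_vec y) = 0"
    have "conj_vec y = 0" using annihilator_trivial y by blast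
    then show "y = 0" by (simp add: conj_eq_0)
  next
    fix w
    assume annihilator_trivial: "\<forall>y. (\<forall>s\<in>S. vec_dot s (conj_vec y) = 0) \<longrightarrow> y = 0"
      and w: "\<forall>s\<in>S. vec_dot s w = 0"
    have "\<forall>s\<in>S. vec_dot s (conj_vec (conj_vec w)) = 0" using w by (simp add: conj_conj)
    then have "conj_vec w = 0" using annihilator_trivial by blast
    then show "w = 0" by (simp add: conj_eq_0)
  qed
  then show ?thesis
    unfolding vec_span_eq_UNIV_iff_annihilator cinner_conj_vec .
qed

lemma vec_span_empty_ne_UNIV: "vec.span {} \<noteq> (UNIV :: ('a::field ^ 'n) set)"
proof
  assume "vec.span {} = (UNIV :: ('a ^ 'n) set)"
  then have "(vec 1 :: 'a ^ 'n) \<in> vec.span {}" by (simp only: UNIV_I)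
  then show False by (simp add: vec_eq_iff)
qed

theorem theorem2p3:
  shows "(\<forall>(f :: nat \<Rightarrow> real ^ 'n) k. is_frame vec.span f k \<longrightarrow>
            (\<exists>y. is_frame vector_space_over_itself.span (\<lambda>i. f i \<bullet> y) k \<and>
                 max_rob vec.span f k = max_rob vector_space_over_itself.span (\<lambda>i. f i \<bullet> y) k))
       \<and> (\<forall>(f :: nat \<Rightarrow> complex ^ 'm) k. is_frame vec.span f k \<longrightarrow>
            (\<exists>y. is_frame vector_space_over_itself.span (\<lambda>i. cinner (f i) y) k \<and>
                 max_rob vec.span f k = max_rob vector_space_over_itself.span (\<lambda>i. cinner (f i) y) k))"
proof (intro conjI allI impI)
  fix f :: "nat \<Rightarrow> real ^ 'n" and k
  assume "is_frame vec.span f k"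
  then show "\<exists>y. is_frame vector_space_over_itself.span (\<lambda>i. f i \<bullet> y) k \<and>
      max_rob vec.span f k = max_rob vector_space_over_itself.span (\<lambda>i. f i \<bullet> y) k"
    by (rule max_rob_eq_max_rob_pairing[OF real_vec_span_eq_UNIV_iff vec_span_empty_ne_UNIV])
next
  fix f :: "nat \<Rightarrow> complex ^ 'm" and k
  assume "is_frame vec.span f k"
  then show "\<exists>y. is_frame vector_space_over_itself.span (\<lambda>i. cinner (f i) y) k \<and>
      max_rob vec.span f k = max_rob vector_space_over_itself.span (\<lambda>i. cinner (f i) y) k"
    by (rule max_rob_eq_max_rob_pairing[OF complex_vec_span_eq_UNIV_iff vec_span_empty_ne_UNIV])
qed

end
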